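(* Let $\rho$ be a representation of $D^{2,2,2}$, let $\{i,j,k\}=\{1,2,3\}$, and let $n\ge1$. Then: 1. $\varphi_i(\Phi^+\rho(a^{ij}_n))=\rho(y_iA^{kj}_n)$; 2. $\varphi_j(\Phi^+\rho(a^{ij}_n))=\rho(y_jA^{kj}_n)$ for $n>1$, and $\varphi_j(\Phi^+\rho(a^{ij}_1))=\rho(y_j(y_i+y_k)A^{kj}_1)$; 3. $\varphi_k(\Phi^+\rho(y_ia^{ij}_n))=\rho(y_kA^{ji}_{n+1})$; 4. $\varphi_i(\Phi^+\rho(A^{ij}_n))=\rho(y_i(y_j+y_k)a^{ik}_n)$; 5. $\varphi_j(\Phi^+\rho(y_kA^{ij}_n))=\rho(y_j(x_k+y_i)a^{ik}_n)$; 6. $\varphi_k(\Phi^+\rho(y_jA^{ij}_n))=\rho(y_ka^{ji}_{n+1})$.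
   Context: $D^{2,2,2}$ is the modular lattice generated by $x_1,y_1,x_2,y_2,x_3,y_3$ subject only to $x_i\subseteq y_i$ ($i=1,2,3$), with a greatest element $I$ adjoined. Meet is written $ab$, join $a+b$. Atomic elements: for distinct $i,j$, let $k$ denote the third index. Define - $a^{ij}_0=I$ and $a^{ij}_n=x_i+y_ja^{jk}_{n-1}$ for $n\ge1$; - $A^{ij}_0=I$ and $A^{ij}_n=y_i+x_jA^{ki}_{n-1}$ for $n\ge1$. A representation $\rho$ of $D^{2,2,2}$ in a finite-dimensional vector space $X_0$ is a lattice morphism from $D^{2,2,2}$ to the subspace lattice of $X_0$, with $\rho(I)=X_0$. Write $X_i=\rho(x_i)\subseteq Y_i=\rho(y_i)$. Put $R=Y_1\oplus Y_2\oplus Y_3$ and $X^1_0=\{(\eta_1,\eta_2,\eta_3)\in R:\sum\eta_i=0\}$. Let $G'_i\subseteq R$ be the triples with $i$-th coordinate in $X_i$, and $H'_i\subseteq R$ the triples with $i$-th coordinate $0$. $\Phi^+\rho$ is the representation in $X^1_0$ with $\Phi^+\rho(y_i)=G'_i\cap X^1_0$, $\Phi^+\rho(x_i)=H'_i\cap X^1_0$, $\Phi^+\rho(I)=X^1_0$. The elementary map $\varphi_i:X^1_0\to X_0$ is $(\eta_1,\eta_2,\eta_3)\mapsto\eta_i$; $\varphi_i(S)$ denotes the image of a subspace $S$. *)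

theory Defs
  imports Complex_Main "HOL-Library.Product_Plus"
begin

text \<open>Since D^{2,2,2} is the modular lattice freely generated subject only to x_i <= y_i
  (with a top I adjoined), a representation is the same as a choice of subspaces
  X_i \<subseteq> Y_i \<subseteq> X_0, and the image of a lattice element is the evaluation of
  any term for it (meet = intersection, join = subspace sum, I = X_0).\<close>

datatype lterm = TopI | Xg nat | Yg nat | Meet lterm lterm | Join lterm lterm

definition ssum :: "'v::plus set \<Rightarrow> 'v set \<Rightarrow> 'v set" where
  "ssum A B = {a + b | a b. a \<in> A \<and> b \<in> B}"

fun rep_eval :: "'v::plus set \<Rightarrow> (nat \<Rightarrow> 'v set) \<Rightarrow> (nat \<Rightarrow> 'v set) \<Rightarrow> lterm \<Rightarrow> 'v set" where
  "rep_eval X0 X Y TopI = X0"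
| "rep_eval X0 X Y (Xg i) = X i"
| "rep_eval X0 X Y (Yg i) = Y i"
| "rep_eval X0 X Y (Meet s t) = rep_eval X0 X Y s \<inter> rep_eval X0 X Y t"
| "rep_eval X0 X Y (Join s t) = ssum (rep_eval X0 X Y s) (rep_eval X0 X Y t)"

definition third :: "nat \<Rightarrow> nat \<Rightarrow> nat" where
  "third i j = 6 - i - j"

fun a_at :: "nat \<Rightarrow> nat \<Rightarrow> nat \<Rightarrow> lterm" where
  "a_at i j 0 = TopI"
| "a_at i j (Suc n) = Join (Xg i) (Meet (Yg j) (a_at j (third i j) n))"

fun A_at :: "nat \<Rightarrow> nat \<Rightarrow> nat \<Rightarrow> lterm" where
  "A_at i j 0 = TopI"
| "A_at i j (Suc n) = Join (Yg i) (Meet (Xg j) (A_at (third i j) i n))"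

definition is_rep :: "('k::field \<Rightarrow> 'v::ab_group_add \<Rightarrow> 'v) \<Rightarrow> 'v set \<Rightarrow> (nat \<Rightarrow> 'v set) \<Rightarrow> (nat \<Rightarrow> 'v set) \<Rightarrow> bool" where
  "is_rep scale X0 X Y \<longleftrightarrow>
     module.subspace scale X0 \<and> (\<exists>B. finite B \<and> X0 = module.span scale B) \<and>
     (\<forall>i\<in>{1,2,3}. module.subspace scale (X i) \<and> module.subspace scale (Y i) \<and>
        X i \<subseteq> Y i \<and> Y i \<subseteq> X0)"

fun coord :: "nat \<Rightarrow> 'v \<times> 'v \<times> 'v \<Rightarrow> 'v" where
  "coord i (e1, e2, e3) = (if i = 1 then e1 else if i = 2 then e2 else e3)"

definition phi :: "nat \<Rightarrow> ('v \<times> 'v \<times> 'v) set \<Rightarrow> 'v set" where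
  "phi i S = coord i ` S"

definition PhiP_X0 :: "(nat \<Rightarrow> 'v::ab_group_add set) \<Rightarrow> ('v \<times> 'v \<times> 'v) set" where
  "PhiP_X0 Y = {(e1, e2, e3). e1 \<in> Y 1 \<and> e2 \<in> Y 2 \<and> e3 \<in> Y 3 \<and> e1 + e2 + e3 = 0}"

definition PhiP_Y :: "(nat \<Rightarrow> 'v::ab_group_add set) \<Rightarrow> (nat \<Rightarrow> 'v set) \<Rightarrow> nat \<Rightarrow> ('v \<times> 'v \<times> 'v) set" where
  "PhiP_Y X Y i = {e \<in> PhiP_X0 Y. coord i e \<in> X i}"

definition PhiP_X :: "(nat \<Rightarrow> 'v::ab_group_add set) \<Rightarrow> nat \<Rightarrow> ('v \<times> 'v \<times> 'v) set" where
  "PhiP_X Y i = {e \<in> PhiP_X0 Y. coord i e = 0}"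

definition PhiP_eval :: "(nat \<Rightarrow> 'v::ab_group_add set) \<Rightarrow> (nat \<Rightarrow> 'v set) \<Rightarrow> lterm \<Rightarrow> ('v \<times> 'v \<times> 'v) set" where
  "PhiP_eval X Y t = rep_eval (PhiP_X0 Y) (PhiP_X Y) (PhiP_Y X Y) t"

end

theory Submission
  imports Defs
begin

(* The points of X^1_0 are the triples (\<eta>_1, \<eta>_2, \<eta>_3) with \<eta>_l \<in> Y_l and \<eta>_1 + \<eta>_2 + \<eta>_3 = 0.
   By induction on n, the subspaces \<Phi>\<^sup>+\<rho>(a^{ij}_n) and \<Phi>\<^sup>+\<rho>(A^{ij}_n) are cut out by a single
   condition on the i-th coordinate, namely \<eta>_i \<in> \<rho>(A^{kj}_n) resp. \<eta>_i \<in> \<rho>(a^{ik}_n); each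
   inductive step is one computation of a sum of two such subspaces of X^1_0.  Since
   \<eta>_k = -\<eta>_i - \<eta>_j, the image under \<phi>_k of the subspace given by \<eta>_i \<in> R_i and \<eta>_j \<in> R_j is
   Y_k \<inter> (Y_i \<inter> R_i + Y_j \<inter> R_j).  The six formulas then follow from the modular law and from
   the containments X_i \<subseteq> \<rho>(a^{ij}_n), Y_i \<subseteq> \<rho>(A^{ij}_n) and \<rho>(A^{ij}_{n+1}) \<subseteq> Y_i + Y_j. *)

lemma ssum_iff: "x \<in> ssum A B \<longleftrightarrow> (\<exists>a\<in>A. \<exists>b\<in>B. x = a + b)"
  by (auto simp: ssum_def)

lemma ssum_commute: "ssum A B = ssum B (A :: 'a::ab_semigroup_add set)"
  unfolding ssum_def by (auto simp: add.commute) (metis add.commute)+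

lemma ssum_mono: "A \<subseteq> A' \<Longrightarrow> B \<subseteq> B' \<Longrightarrow> ssum A B \<subseteq> ssum A' B'"
  by (auto simp: ssum_def)

lemma add_mem_ssum: "a \<in> A \<Longrightarrow> b \<in> B \<Longrightarrow> a + b \<in> ssum A B"
  by (auto simp: ssum_def)

lemma subset_ssum_left: "0 \<in> B \<Longrightarrow> A \<subseteq> ssum A (B :: 'a::monoid_add set)"
  by (force simp: ssum_def)

lemma subset_ssum_right: "0 \<in> A \<Longrightarrow> B \<subseteq> ssum (A :: 'a::monoid_add set) B"
  by (force simp: ssum_def)

context vector_space
begin

lemma subspace_ssum: "subspace A \<Longrightarrow> subspace B \<Longrightarrow> subspace (ssum A B)"
  unfolding ssum_def by (rule subspace_sums)

lemma ssum_subset_subspace: "subspace S \<Longrightarrow> A \<subseteq> S \<Longrightarrow> B \<subseteq> S \<Longrightarrow> ssum A B \<subseteq> S"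
  by (auto simp: ssum_iff intro!: subspace_add)

lemma ssum_Int_modular:
  assumes "subspace C" and "A \<subseteq> C"
  shows "ssum A B \<inter> C = ssum A (B \<inter> C)"
proof (intro equalityI subsetI)
  fix x assume "x \<in> ssum A B \<inter> C"
  then obtain a b where "a \<in> A" "b \<in> B" "x = a + b" "x \<in> C" by (auto simp: ssum_iff)
  moreover have "b = x - a" using \<open>x = a + b\<close> by simp
  ultimately have "b \<in> C" using assms by (metis subsetD subspace_diff)
  then show "x \<in> ssum A (B \<inter> C)" using \<open>a \<in> A\<close> \<open>b \<in> B\<close> \<open>x = a + b\<close> by (auto simp: ssum_iff)
next
  fix x assume "x \<in> ssum A (B \<inter> C)"
  then obtain a b where "a \<in> A" "b \<in> B" "b \<in> C" "x = a + b" by (auto simp: ssum_iff)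
  then show "x \<in> ssum A B \<inter> C" using assms by (auto simp: ssum_iff intro: subspace_add)
qed

end

lemma index_triple_cases:
  assumes "{i, j, k} = {1, 2, 3::nat}"
  shows "(i, j, k) \<in> {(1, 2, 3), (1, 3, 2), (2, 1, 3), (2, 3, 1), (3, 1, 2), (3, 2, 1)}"
proof -
  have "i \<in> {1, 2, 3}" "j \<in> {1, 2, 3}" "k \<in> {1, 2, 3}" unfolding assms[symmetric] by simp_all
  moreover have "card {i, j, k} = 3" unfolding assms by simp
  then have "i \<noteq> j" "i \<noteq> k" "j \<noteq> k" by (auto simp: card_insert_if split: if_splits)
  ultimately show ?thesis by auto
qed

lemma index_triple_perms:
  assumes "{i, j, k} = {1, 2, 3::nat}"
  shows "{i, k, j} = {1, 2, 3}" "{j, i, k} = {1, 2, 3}" "{j, k, i} = {1, 2, 3}"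
    "{k, i, j} = {1, 2, 3}" "{k, j, i} = {1, 2, 3}"
  using assms by (metis insert_commute)+

lemma index_triple_mem:
  assumes "{i, j, k} = {1, 2, 3::nat}"
  shows "i \<in> {1, 2, 3}" "j \<in> {1, 2, 3}" "k \<in> {1, 2, 3}"
  using assms by blast+

lemma third_eq: "{i, j, k} = {1, 2, 3} \<Longrightarrow> third i j = k"
  by (drule index_triple_cases) (auto simp: third_def)

lemma coord_add: "coord l (e + f) = coord l e + coord l f"
  by (cases e; cases f) auto

lemma coord_diff: "coord l (e - f) = coord l e - coord l f"
  by (cases e; cases f) auto

lemma ex_coords:
  assumes "{i, j, k} = {1, 2, 3::nat}"
  shows "\<exists>e. coord i e = a \<and> coord j e = b \<and> coord k e = c"
proof
  let ?f = "\<lambda>l. if l = i then a else if l = j then b else c"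
  show "coord i (?f 1, ?f 2, ?f 3) = a \<and> coord j (?f 1, ?f 2, ?f 3) = b \<and> coord k (?f 1, ?f 2, ?f 3) = c"
    using index_triple_cases[OF assms] by (simp, elim disjE; simp)
qed

lemma mem_PhiP_X0_iff:
  assumes "{i, j, k} = {1, 2, 3::nat}"
  shows "e \<in> PhiP_X0 Y \<longleftrightarrow>
    coord i e \<in> Y i \<and> coord j e \<in> Y j \<and> coord k e \<in> Y k \<and> coord i e + coord j e + coord k e = 0"
  using index_triple_cases[OF assms] by (cases e) (simp, elim disjE; simp add: PhiP_X0_def ac_simps)

lemma coord_mem_PhiP_X0: "l \<in> {1, 2, 3} \<Longrightarrow> e \<in> PhiP_X0 Y \<Longrightarrow> coord l e \<in> Y l"
  by (cases e) (auto simp: PhiP_X0_def)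

lemma coord_PhiP_X0_eq:
  assumes "{i, j, k} = {1, 2, 3::nat}" and "e \<in> PhiP_X0 Y"
  shows "coord k e = - coord i e + - coord j e"
proof -
  have "coord i e + coord j e + coord k e = 0" using assms mem_PhiP_X0_iff by blast
  then show ?thesis by (metis add.commute minus_add_distrib neg_eq_iff_add_eq_0)
qed

locale D222_representation = vector_space scale
  for scale :: "'a::field \<Rightarrow> 'b::ab_group_add \<Rightarrow> 'b" +
  fixes X0 :: "'b set" and X Y :: "nat \<Rightarrow> 'b set"
  assumes subspace_X0: "subspace X0"
    and subspace_X: "l \<in> {1, 2, 3} \<Longrightarrow> subspace (X l)"
    and subspace_Y: "l \<in> {1, 2, 3} \<Longrightarrow> subspace (Y l)"
    and X_subset_Y: "l \<in> {1, 2, 3} \<Longrightarrow> X l \<subseteq> Y l"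
    and Y_subset_X0: "l \<in> {1, 2, 3} \<Longrightarrow> Y l \<subseteq> X0"
begin

abbreviation rho :: "lterm \<Rightarrow> 'b set" where
  "rho \<equiv> rep_eval X0 X Y"

abbreviation Phi :: "lterm \<Rightarrow> ('b \<times> 'b \<times> 'b) set" where
  "Phi \<equiv> PhiP_eval X Y"

abbreviation X1_0 :: "('b \<times> 'b \<times> 'b) set" where
  "X1_0 \<equiv> PhiP_X0 Y"

definition coord_vimage :: "nat \<Rightarrow> 'b set \<Rightarrow> ('b \<times> 'b \<times> 'b) set" where
  "coord_vimage l R = {e \<in> X1_0. coord l e \<in> R}"

lemma subspace_rho_a_A:
  assumes "{i, j, k} = {1, 2, 3}"
  shows "subspace (rho (a_at i j n)) \<and> subspace (rho (A_at i j n))"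
  using assms
proof (induction n arbitrary: i j k)
  case 0
  then show ?case using subspace_X0 by simp
next
  case (Suc n)
  note m = index_triple_mem[OF Suc.prems]
  have "subspace (rho (a_at j k n))"
    using Suc.IH[OF index_triple_perms(3)[OF Suc.prems]] by (rule conjunct1)
  moreover have "subspace (rho (A_at k i n))"
    using Suc.IH[OF index_triple_perms(4)[OF Suc.prems]] by (rule conjunct2)
  ultimately show ?case
    unfolding a_at.simps A_at.simps rep_eval.simps third_eq[OF Suc.prems]
    by (intro conjI subspace_ssum subspace_inter subspace_X subspace_Y m)
qed

lemma X_subset_rho_a_at:
  assumes "{i, j, k} = {1, 2, 3}"
  shows "X i \<subseteq> rho (a_at i j n)"
proof (cases n)
  case 0
  then show ?thesis
    using X_subset_Y[OF index_triple_mem(1)[OF assms]] Y_subset_X0[OF index_triple_mem(1)[OF assms]]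
    by auto
next
  case (Suc m)
  have "subspace (Y j \<inter> rho (a_at j k m))"
    using subspace_Y[OF index_triple_mem(2)[OF assms]] subspace_rho_a_A[OF index_triple_perms(3)[OF assms]]
    by (blast intro: subspace_inter)
  then show ?thesis
    unfolding Suc a_at.simps rep_eval.simps third_eq[OF assms] by (intro subset_ssum_left subspace_0)
qed

lemma Y_subset_rho_A_at:
  assumes "{i, j, k} = {1, 2, 3}"
  shows "Y i \<subseteq> rho (A_at i j n)"
proof (cases n)
  case 0
  then show ?thesis using Y_subset_X0[OF index_triple_mem(1)[OF assms]] by simp
next
  case (Suc m)
  have "subspace (X j \<inter> rho (A_at k i m))"
    using subspace_X[OF index_triple_mem(2)[OF assms]] subspace_rho_a_A[OF index_triple_perms(4)[OF assms]]
    by (blast intro: subspace_inter)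
  then show ?thesis
    unfolding Suc A_at.simps rep_eval.simps third_eq[OF assms] by (intro subset_ssum_left subspace_0)
qed

lemma rho_A_at_Suc_subset:
  assumes "{i, j, k} = {1, 2, 3}"
  shows "rho (A_at i j (Suc n)) \<subseteq> ssum (Y i) (Y j)"
  using X_subset_Y[OF index_triple_mem(2)[OF assms]] by (simp add: ssum_mono le_infI1)

lemma rho_A_at_Suc_Suc_subset:
  assumes "{i, j, k} = {1, 2, 3}"
  shows "rho (A_at i j (Suc (Suc n))) \<subseteq> ssum (Y i) (Y k)"
proof -
  note m = index_triple_mem[OF assms]
  have "rho (A_at k i (Suc n)) \<subseteq> ssum (Y i) (Y k)"
    using rho_A_at_Suc_subset[OF index_triple_perms(4)[OF assms]] by (simp add: ssum_commute)
  then have "X j \<inter> rho (A_at k i (Suc n)) \<subseteq> ssum (Y i) (Y k)" by blast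
  moreover have "Y i \<subseteq> ssum (Y i) (Y k)"
    by (intro subset_ssum_left subspace_0 subspace_Y m)
  moreover have "subspace (ssum (Y i) (Y k))"
    by (intro subspace_ssum subspace_Y m)
  ultimately show ?thesis
    unfolding A_at.simps rep_eval.simps third_eq[OF assms] by (simp add: ssum_subset_subspace)
qed

subsection \<open>Subspaces of X^1_0 cut out by coordinates\<close>

lemma add_mem_X1_0:
  assumes "e \<in> X1_0" and "f \<in> X1_0"
  shows "e + f \<in> X1_0"
proof (cases e, cases f)
  fix e1 e2 e3 f1 f2 f3 assume [simp]: "e = (e1, e2, e3)" "f = (f1, f2, f3)"
  have "e1 + e2 + e3 = 0" "f1 + f2 + f3 = 0" using assms by (simp_all add: PhiP_X0_def)
  have "e1 + f1 + (e2 + f2) + (e3 + f3) = (e1 + e2 + e3) + (f1 + f2 + f3)"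
    by (simp add: algebra_simps)
  also have "\<dots> = 0" using \<open>e1 + e2 + e3 = 0\<close> \<open>f1 + f2 + f3 = 0\<close> by simp
  finally show ?thesis using assms by (simp add: PhiP_X0_def subspace_add subspace_Y)
qed

lemma diff_mem_X1_0:
  assumes "e \<in> X1_0" and "f \<in> X1_0"
  shows "e - f \<in> X1_0"
proof (cases e, cases f)
  fix e1 e2 e3 f1 f2 f3 assume [simp]: "e = (e1, e2, e3)" "f = (f1, f2, f3)"
  have "e1 + e2 + e3 = 0" "f1 + f2 + f3 = 0" using assms by (simp_all add: PhiP_X0_def)
  have "e1 - f1 + (e2 - f2) + (e3 - f3) = (e1 + e2 + e3) - (f1 + f2 + f3)"
    by (simp add: algebra_simps)
  also have "\<dots> = 0" using \<open>e1 + e2 + e3 = 0\<close> \<open>f1 + f2 + f3 = 0\<close> by simp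
  finally show ?thesis using assms by (simp add: PhiP_X0_def subspace_diff subspace_Y)
qed

lemma coord_vimage_subset: "coord_vimage l R \<subseteq> X1_0"
  by (auto simp: coord_vimage_def)

lemma coord_vimage_Int: "coord_vimage l A \<inter> coord_vimage l B = coord_vimage l (A \<inter> B)"
  by (auto simp: coord_vimage_def)

lemma coord_vimage_UNIV: "coord_vimage l UNIV = X1_0"
  by (simp add: coord_vimage_def)

lemma coord_vimage_X0:
  assumes "l \<in> {1, 2, 3}"
  shows "coord_vimage l X0 = X1_0"
  using coord_mem_PhiP_X0[OF assms, where Y = Y] Y_subset_X0[OF assms] by (auto simp: coord_vimage_def)

lemma Phi_simps:
  "Phi TopI = X1_0"
  "Phi (Xg l) = coord_vimage l {0}"
  "Phi (Yg l) = coord_vimage l (X l)"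
  "Phi (Meet s t) = Phi s \<inter> Phi t"
  "Phi (Join s t) = ssum (Phi s) (Phi t)"
  by (auto simp: PhiP_eval_def PhiP_X_def PhiP_Y_def coord_vimage_def)

lemma ssum_coord_vimage_zero:
  assumes ijk: "{i, j, k} = {1, 2, 3}" and S: "subspace S" "S \<subseteq> Y j"
  shows "ssum (coord_vimage i {0}) (coord_vimage j S) = coord_vimage i (ssum (Y k) S)"
proof (intro equalityI subsetI)
  note m = index_triple_mem[OF ijk]
  fix e assume "e \<in> ssum (coord_vimage i {0}) (coord_vimage j S)"
  then obtain h g where h: "h \<in> X1_0" "coord i h = 0" and g: "g \<in> X1_0" "coord j g \<in> S"
    and e: "e = h + g"
    by (auto simp: ssum_iff coord_vimage_def)
  have "coord i e = - coord k g + - coord j g"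
    using coord_PhiP_X0_eq[OF index_triple_perms(5)[OF ijk] g(1)] e h(2) by (simp add: coord_add)
  also have "\<dots> \<in> ssum (Y k) S"
    using subspace_neg[OF subspace_Y[OF m(3)] coord_mem_PhiP_X0[OF m(3) g(1)]]
      subspace_neg[OF S(1) g(2)] by (rule add_mem_ssum)
  finally show "e \<in> coord_vimage i (ssum (Y k) S)"
    using e add_mem_X1_0[OF h(1) g(1)] by (simp add: coord_vimage_def)
next
  note m = index_triple_mem[OF ijk]
  fix e assume "e \<in> coord_vimage i (ssum (Y k) S)"
  then obtain y s where e: "e \<in> X1_0" "coord i e = y + s" and y: "y \<in> Y k" and s: "s \<in> S"
    by (auto simp: coord_vimage_def ssum_iff)
  obtain g where g: "coord i g = coord i e" "coord j g = - s" "coord k g = - y"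
    using ex_coords[OF ijk, where a = "coord i e" and b = "- s" and c = "- y"] by blast
  have "- s \<in> S" "- s \<in> Y j" using subspace_neg[OF S(1) s] S(2) by auto
  moreover have "- y \<in> Y k" by (rule subspace_neg[OF subspace_Y[OF m(3)] y])
  moreover have "coord i e + - s + - y = 0" using e(2) by (simp add: algebra_simps)
  ultimately have "g \<in> X1_0"
    unfolding mem_PhiP_X0_iff[OF ijk] g using coord_mem_PhiP_X0[OF m(1) e(1)] by simp
  then have "e - g \<in> coord_vimage i {0}" and "g \<in> coord_vimage j S"
    using diff_mem_X1_0[OF e(1)] g \<open>- s \<in> S\<close> by (simp_all add: coord_vimage_def coord_diff)
  then have "e - g + g \<in> ssum (coord_vimage i {0}) (coord_vimage j S)" by (rule add_mem_ssum)
  then show "e \<in> ssum (coord_vimage i {0}) (coord_vimage j S)" by simp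
qed

lemma ssum_coord_vimage_Int_zero:
  assumes ijk: "{i, j, k} = {1, 2, 3}" and A: "subspace A" "A \<subseteq> Y i" and R: "subspace R"
  shows "ssum (coord_vimage i A) (coord_vimage j {0} \<inter> coord_vimage k R)
    = coord_vimage i (ssum A (Y k \<inter> R))"
proof (intro equalityI subsetI)
  note m = index_triple_mem[OF ijk]
  fix e assume "e \<in> ssum (coord_vimage i A) (coord_vimage j {0} \<inter> coord_vimage k R)"
  then obtain g h where g: "g \<in> X1_0" "coord i g \<in> A"
    and h: "h \<in> X1_0" "coord j h = 0" "coord k h \<in> R" and e: "e = g + h"
    by (auto simp: ssum_iff coord_vimage_def)
  have "- coord k h \<in> Y k \<inter> R"
    using subspace_neg[OF subspace_Y[OF m(3)] coord_mem_PhiP_X0[OF m(3) h(1)]]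
      subspace_neg[OF R h(3)] by blast
  have "coord i e = coord i g + - coord k h"
    using coord_PhiP_X0_eq[OF index_triple_perms(3)[OF ijk] h(1)] e h(2) by (simp add: coord_add)
  also have "\<dots> \<in> ssum A (Y k \<inter> R)" using g(2) \<open>- coord k h \<in> Y k \<inter> R\<close> by (rule add_mem_ssum)
  finally show "e \<in> coord_vimage i (ssum A (Y k \<inter> R))"
    using e add_mem_X1_0[OF g(1) h(1)] by (simp add: coord_vimage_def)
next
  note m = index_triple_mem[OF ijk]
  fix e assume "e \<in> coord_vimage i (ssum A (Y k \<inter> R))"
  then obtain a z where e: "e \<in> X1_0" "coord i e = a + z" and a: "a \<in> A" and z: "z \<in> Y k" "z \<in> R"
    by (auto simp: coord_vimage_def ssum_iff)
  have "z = coord i e - a" using e(2) by simp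
  then have "z \<in> Y i"
    using subspace_diff[OF subspace_Y[OF m(1)] coord_mem_PhiP_X0[OF m(1) e(1)]] a A(2) by blast
  obtain h where h: "coord i h = z" "coord j h = 0" "coord k h = - z"
    using ex_coords[OF ijk, where a = z and b = 0 and c = "- z"] by blast
  have "h \<in> X1_0"
    unfolding mem_PhiP_X0_iff[OF ijk] h
    using \<open>z \<in> Y i\<close> subspace_0[OF subspace_Y[OF m(2)]] subspace_neg[OF subspace_Y[OF m(3)] z(1)]
    by simp
  then have "e - h \<in> coord_vimage i A" and "h \<in> coord_vimage j {0} \<inter> coord_vimage k R"
    using diff_mem_X1_0[OF e(1)] h e(2) a subspace_neg[OF R z(2)]
    by (simp_all add: coord_vimage_def coord_diff)
  then have "e - h + h \<in> ssum (coord_vimage i A) (coord_vimage j {0} \<inter> coord_vimage k R)"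
    by (rule add_mem_ssum)
  then show "e \<in> ssum (coord_vimage i A) (coord_vimage j {0} \<inter> coord_vimage k R)" by simp
qed

lemma phi_coord_vimage_Int:
  assumes ijk: "{i, j, k} = {1, 2, 3}" and Ri: "subspace Ri" and Rj: "subspace Rj"
  shows "phi k (coord_vimage i Ri \<inter> coord_vimage j Rj) = Y k \<inter> ssum (Y i \<inter> Ri) (Y j \<inter> Rj)"
proof (intro equalityI subsetI)
  note m = index_triple_mem[OF ijk]
  fix v assume "v \<in> phi k (coord_vimage i Ri \<inter> coord_vimage j Rj)"
  then obtain e where e: "e \<in> X1_0" "coord i e \<in> Ri" "coord j e \<in> Rj" and v: "v = coord k e"
    by (auto simp: phi_def coord_vimage_def)
  have "v = - coord i e + - coord j e" using coord_PhiP_X0_eq[OF ijk e(1)] v by simp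
  also have "\<dots> \<in> ssum (Y i \<inter> Ri) (Y j \<inter> Rj)"
    using subspace_neg[OF subspace_Y[OF m(1)] coord_mem_PhiP_X0[OF m(1) e(1)]] subspace_neg[OF Ri e(2)]
      subspace_neg[OF subspace_Y[OF m(2)] coord_mem_PhiP_X0[OF m(2) e(1)]] subspace_neg[OF Rj e(3)]
    by (intro add_mem_ssum IntI)
  finally show "v \<in> Y k \<inter> ssum (Y i \<inter> Ri) (Y j \<inter> Rj)"
    using coord_mem_PhiP_X0[OF m(3) e(1)] v by simp
next
  note m = index_triple_mem[OF ijk]
  fix v assume "v \<in> Y k \<inter> ssum (Y i \<inter> Ri) (Y j \<inter> Rj)"
  then obtain a b where v: "v \<in> Y k" "v = a + b" and a: "a \<in> Y i" "a \<in> Ri" and b: "b \<in> Y j" "b \<in> Rj"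
    by (auto simp: ssum_iff)
  obtain e where e: "coord i e = - a" "coord j e = - b" "coord k e = v"
    using ex_coords[OF ijk, where a = "- a" and b = "- b" and c = v] by blast
  have "- a + - b + v = 0" using v(2) by (simp add: algebra_simps)
  then have "e \<in> X1_0"
    unfolding mem_PhiP_X0_iff[OF ijk] e
    using subspace_neg[OF subspace_Y[OF m(1)] a(1)] subspace_neg[OF subspace_Y[OF m(2)] b(1)] v(1)
    by simp
  then have "e \<in> coord_vimage i Ri \<inter> coord_vimage j Rj"
    using e subspace_neg[OF Ri a(2)] subspace_neg[OF Rj b(2)] by (simp add: coord_vimage_def)
  then show "v \<in> phi k (coord_vimage i Ri \<inter> coord_vimage j Rj)"
    unfolding phi_def using e(3)[symmetric] by (rule rev_image_eqI)
qed

lemma phi_coord_vimage: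
  assumes "{i, j, k} = {1, 2, 3}" and "subspace R"
  shows "phi k (coord_vimage i R) = Y k \<inter> ssum (Y i \<inter> R) (Y j)"
  using phi_coord_vimage_Int[OF assms subspace_UNIV] coord_vimage_subset[of i R]
  by (simp add: coord_vimage_UNIV Int_absorb2)

lemma phi_X1_0:
  assumes "{i, j, k} = {1, 2, 3}"
  shows "phi k X1_0 = Y k \<inter> ssum (Y i) (Y j)"
  using phi_coord_vimage[OF assms subspace_UNIV] by (simp add: coord_vimage_UNIV)

lemma phi_coord_vimage_self: "phi l (coord_vimage l R) = R \<inter> phi l X1_0"
  by (auto simp: phi_def coord_vimage_def)

lemma Phi_a_at:
  assumes "{i, j, k} = {1, 2, 3}"
  shows "Phi (a_at i j n) = coord_vimage i (rho (A_at k j n))"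
  using assms
proof (induction n arbitrary: i j k)
  case 0
  then show ?case using coord_vimage_X0[OF index_triple_mem(1)[OF 0]] by (simp add: Phi_simps)
next
  case (Suc n)
  note m = index_triple_mem[OF Suc.prems]
  let ?R = "rho (A_at i k n)"
  have "subspace (X j \<inter> ?R)"
    using subspace_X[OF m(2)] subspace_rho_a_A[OF index_triple_perms(1)[OF Suc.prems]]
    by (blast intro: subspace_inter)
  moreover have "X j \<inter> ?R \<subseteq> Y j" using X_subset_Y[OF m(2)] by blast
  moreover have "Phi (a_at j k n) = coord_vimage j ?R"
    by (rule Suc.IH[OF index_triple_perms(3)[OF Suc.prems]])
  ultimately have "Phi (a_at i j (Suc n)) = coord_vimage i (ssum (Y k) (X j \<inter> ?R))"
    by (simp add: Phi_simps third_eq[OF Suc.prems] coord_vimage_Int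
        ssum_coord_vimage_zero[OF Suc.prems])
  then show ?case by (simp add: third_eq[OF index_triple_perms(5)[OF Suc.prems]])
qed

lemma Phi_A_at:
  assumes "{i, j, k} = {1, 2, 3}"
  shows "Phi (A_at i j n) = coord_vimage i (rho (a_at i k n))"
  using assms
proof (induction n arbitrary: i j k)
  case 0
  then show ?case using coord_vimage_X0[OF index_triple_mem(1)[OF 0]] by (simp add: Phi_simps)
next
  case (Suc n)
  note m = index_triple_mem[OF Suc.prems]
  let ?R = "rho (a_at k j n)"
  have "subspace ?R"
    using subspace_rho_a_A[OF index_triple_perms(5)[OF Suc.prems]] by (rule conjunct1)
  moreover have "Phi (A_at k i n) = coord_vimage k ?R"
    by (rule Suc.IH[OF index_triple_perms(4)[OF Suc.prems]])
  ultimately have "Phi (A_at i j (Suc n)) = coord_vimage i (ssum (X i) (Y k \<inter> ?R))"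
    using subspace_X[OF m(1)] X_subset_Y[OF m(1)]
    by (simp add: Phi_simps third_eq[OF Suc.prems] ssum_coord_vimage_Int_zero[OF Suc.prems])
  then show ?case by (simp add: third_eq[OF index_triple_perms(1)[OF Suc.prems]])
qed

subsection \<open>The images under the elementary maps\<close>

lemma phi_Phi_a_at_first:
  assumes ijk: "{i, j, k} = {1, 2, 3}" and "1 \<le> n"
  shows "phi i (Phi (a_at i j n)) = rho (Meet (Yg i) (A_at k j n))"
proof -
  obtain m where "n = Suc m" using \<open>1 \<le> n\<close> by (cases n) auto
  then have "rho (A_at k j n) \<subseteq> ssum (Y j) (Y k)"
    using rho_A_at_Suc_subset[OF index_triple_perms(5)[OF ijk]] by (simp add: ssum_commute)
  then show ?thesis
    unfolding Phi_a_at[OF ijk] phi_coord_vimage_self phi_X1_0[OF index_triple_perms(3)[OF ijk]]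
    by auto
qed

lemma phi_Phi_a_at_second:
  assumes ijk: "{i, j, k} = {1, 2, 3}"
  shows "phi j (Phi (a_at i j n)) = rho (Meet (Yg j) (Meet (Join (Yg i) (Yg k)) (A_at k j n)))"
proof -
  let ?R = "rho (A_at k j n)"
  have R: "subspace ?R"
    using subspace_rho_a_A[OF index_triple_perms(5)[OF ijk]] by (rule conjunct2)
  have "phi j (Phi (a_at i j n)) = Y j \<inter> ssum (Y i \<inter> ?R) (Y k)"
    unfolding Phi_a_at[OF ijk] by (rule phi_coord_vimage[OF index_triple_perms(1)[OF ijk] R])
  also have "ssum (Y i \<inter> ?R) (Y k) = ssum (Y k) (Y i) \<inter> ?R"
    using ssum_Int_modular[OF R Y_subset_rho_A_at[OF index_triple_perms(5)[OF ijk]]]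
    by (simp add: ssum_commute)
  finally show ?thesis by (simp add: ssum_commute)
qed

lemma phi_Phi_a_at_second_gt1:
  assumes ijk: "{i, j, k} = {1, 2, 3}" and "1 < n"
  shows "phi j (Phi (a_at i j n)) = rho (Meet (Yg j) (A_at k j n))"
proof -
  obtain m where "n = Suc (Suc m)" using \<open>1 < n\<close> by (cases n; cases "n - 1") auto
  then have "rho (A_at k j n) \<subseteq> ssum (Y i) (Y k)"
    using rho_A_at_Suc_Suc_subset[OF index_triple_perms(5)[OF ijk]] by (simp add: ssum_commute)
  then show ?thesis using phi_Phi_a_at_second[OF ijk] by auto
qed

lemma phi_Phi_Meet_a_at_third:
  assumes ijk: "{i, j, k} = {1, 2, 3}"
  shows "phi k (Phi (Meet (Yg i) (a_at i j n))) = rho (Meet (Yg k) (A_at j i (n + 1)))"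
proof -
  note m = index_triple_mem[OF ijk]
  let ?R = "rho (A_at k j n)"
  have "subspace (X i \<inter> ?R)"
    using subspace_X[OF m(1)] subspace_rho_a_A[OF index_triple_perms(5)[OF ijk]]
    by (blast intro: subspace_inter)
  then have "phi k (Phi (Meet (Yg i) (a_at i j n))) = Y k \<inter> ssum (Y i \<inter> (X i \<inter> ?R)) (Y j)"
    unfolding Phi_simps Phi_a_at[OF ijk] coord_vimage_Int by (rule phi_coord_vimage[OF ijk])
  also have "Y i \<inter> (X i \<inter> ?R) = X i \<inter> ?R" using X_subset_Y[OF m(1)] by blast
  finally show ?thesis
    by (simp add: third_eq[OF index_triple_perms(2)[OF ijk]] ssum_commute)
qed

lemma phi_Phi_A_at_first:
  assumes ijk: "{i, j, k} = {1, 2, 3}"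
  shows "phi i (Phi (A_at i j n)) = rho (Meet (Yg i) (Meet (Join (Yg j) (Yg k)) (a_at i k n)))"
  unfolding Phi_A_at[OF ijk] phi_coord_vimage_self phi_X1_0[OF index_triple_perms(3)[OF ijk]]
  by auto

lemma phi_Phi_Meet_A_at_second:
  assumes ijk: "{i, j, k} = {1, 2, 3}" and "1 \<le> n"
  shows "phi j (Phi (Meet (Yg k) (A_at i j n)))
    = rho (Meet (Yg j) (Meet (Join (Xg k) (Yg i)) (a_at i k n)))"
proof -
  note m = index_triple_mem[OF ijk]
  let ?Q = "rho (a_at i k n)"
  have Q: "subspace ?Q"
    using subspace_rho_a_A[OF index_triple_perms(1)[OF ijk]] by (rule conjunct1)
  obtain n' where n: "n = Suc n'" using \<open>1 \<le> n\<close> by (cases n) auto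
  have "0 \<in> X i" by (rule subspace_0[OF subspace_X[OF m(1)]])
  moreover have "X k \<subseteq> Y k \<inter> rho (a_at k j n')"
    using X_subset_Y[OF m(3)] X_subset_rho_a_at[OF index_triple_perms(5)[OF ijk]] by blast
  ultimately have XQ: "X k \<subseteq> ?Q"
    unfolding n a_at.simps rep_eval.simps third_eq[OF index_triple_perms(1)[OF ijk]]
    by (meson order_trans subset_ssum_right)
  have "phi j (Phi (Meet (Yg k) (A_at i j n))) = Y j \<inter> ssum (Y i \<inter> ?Q) (Y k \<inter> X k)"
    unfolding Phi_simps Phi_A_at[OF ijk] Int_commute[of "coord_vimage k (X k)"]
    by (rule phi_coord_vimage_Int[OF index_triple_perms(1)[OF ijk] Q subspace_X[OF m(3)]])
  also have "ssum (Y i \<inter> ?Q) (Y k \<inter> X k) = ssum (X k) (Y i) \<inter> ?Q"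
    using X_subset_Y[OF m(3)] ssum_Int_modular[OF Q XQ, of "Y i"]
    by (simp add: ssum_commute Int_absorb1)
  finally show ?thesis by simp
qed

lemma phi_Phi_Meet_A_at_third:
  assumes ijk: "{i, j, k} = {1, 2, 3}"
  shows "phi k (Phi (Meet (Yg j) (A_at i j n))) = rho (Meet (Yg k) (a_at j i (n + 1)))"
proof -
  note m = index_triple_mem[OF ijk]
  let ?Q = "rho (a_at i k n)"
  have Q: "subspace ?Q"
    using subspace_rho_a_A[OF index_triple_perms(1)[OF ijk]] by (rule conjunct1)
  have "phi k (Phi (Meet (Yg j) (A_at i j n))) = Y k \<inter> ssum (Y i \<inter> ?Q) (Y j \<inter> X j)"
    unfolding Phi_simps Phi_A_at[OF ijk] Int_commute[of "coord_vimage j (X j)"]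
    by (rule phi_coord_vimage_Int[OF ijk Q subspace_X[OF m(2)]])
  also have "Y j \<inter> X j = X j" using X_subset_Y[OF m(2)] by blast
  finally show ?thesis
    by (simp add: third_eq[OF index_triple_perms(2)[OF ijk]] ssum_commute)
qed

end

theorem mainTheorem10:
  fixes scale :: "'k::field \<Rightarrow> 'v::ab_group_add \<Rightarrow> 'v"
    and X0 :: "'v set" and X Y :: "nat \<Rightarrow> 'v set"
    and i j k n :: nat
  assumes "vector_space scale"
    and "is_rep scale X0 X Y"
    and "{i, j, k} = {1, 2, 3}"
    and "n \<ge> 1"
  shows
    "phi i (PhiP_eval X Y (a_at i j n)) = rep_eval X0 X Y (Meet (Yg i) (A_at k j n))
   \<and> (n > 1 \<longrightarrow> phi j (PhiP_eval X Y (a_at i j n)) = rep_eval X0 X Y (Meet (Yg j) (A_at k j n)))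
   \<and> phi j (PhiP_eval X Y (a_at i j 1))
       = rep_eval X0 X Y (Meet (Yg j) (Meet (Join (Yg i) (Yg k)) (A_at k j 1)))
   \<and> phi k (PhiP_eval X Y (Meet (Yg i) (a_at i j n))) = rep_eval X0 X Y (Meet (Yg k) (A_at j i (n + 1)))
   \<and> phi i (PhiP_eval X Y (A_at i j n))
       = rep_eval X0 X Y (Meet (Yg i) (Meet (Join (Yg j) (Yg k)) (a_at i k n)))
   \<and> phi j (PhiP_eval X Y (Meet (Yg k) (A_at i j n)))
       = rep_eval X0 X Y (Meet (Yg j) (Meet (Join (Xg k) (Yg i)) (a_at i k n)))
   \<and> phi k (PhiP_eval X Y (Meet (Yg j) (A_at i j n))) = rep_eval X0 X Y (Meet (Yg k) (a_at j i (n + 1)))"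
proof -
  interpret D222_representation scale X0 X Y
    using assms(1,2) unfolding is_rep_def
    by (intro D222_representation.intro D222_representation_axioms.intro) auto
  show ?thesis
    using phi_Phi_a_at_first[OF assms(3,4)] phi_Phi_a_at_second_gt1[OF assms(3)]
      phi_Phi_a_at_second[OF assms(3), of 1] phi_Phi_Meet_a_at_third[OF assms(3)]
      phi_Phi_A_at_first[OF assms(3)] phi_Phi_Meet_A_at_second[OF assms(3,4)]
      phi_Phi_Meet_A_at_third[OF assms(3)]
    by blast
qed

end
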